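(* Let $K\ge1$ be fixed, let $\boldsymbol{\beta}_0\in\mathbb{R}^K$, and for each $n$ let $\mathbf{x}_1,\dots,\mathbf{x}_n\in\mathbb{R}^K$ (rows of the $n\times K$ design matrix $\mathbf{X}$) satisfy: (i) $\sum_{i=1}^n x_{i,k}=0$ and $\sum_{i=1}^n x_{i,k}^2=n$ for each $k$; (ii) $\max_{1\le i\le n}\|\mathbf{x}_i\|/\sqrt n\to0$; (iii) $\mathbf{X}^t\mathbf{X}$ is positive definite; (iv) $\mathbf{X}^t\mathbf{X}/n\to\boldsymbol{\Sigma}_0$ with $\boldsymbol{\Sigma}_0$ positive definite. Suppose the data follow $Y_{ni}=\mathbf{x}_i^t\boldsymbol{\beta}_n+\varepsilon_{ni}$, $i=1,\dots,n$, with $\boldsymbol{\beta}_n=\boldsymbol{\beta}_0/\sqrt n$, where for each $n$ the $\varepsilon_{n1},\dots,\varepsilon_{nn}$ are independent with $\mathbb{E}(\varepsilon_{ni})=0$, $\mathbb{E}(\varepsilon_{ni}^2)=1$ and $\mathbb{E}(\varepsilon_{ni}^4)\le M$ for some $M<\infty$. Let $Y_{ni}^*=\sqrt n\,Y_{ni}$, $\mathbf{Y}_n^*=(Y_{n1}^*,\dots,Y_{nn}^* )^t$, and consider the Bayesian model $(Y_{ni}^*\mid\mathbf{x}_i,\boldsymbol{\beta})$ independent $N(\mathbf{x}_i^t\boldsymbol{\beta},n)$, $(\boldsymbol{\beta}\mid\boldsymbol{\gamma})\sim\nu(d\boldsymbol{\beta}\mid\boldsymbol{\gamma})$, $\boldsymbol{\gamma}\sim\pi$,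 and suppose the marginal prior $\nu$ of $\boldsymbol{\beta}$ has a density $f$ that is continuous and positive everywhere. Let $\nu_n(\cdot\mid\mathbf{Y}_n^* )$ be the posterior of $\boldsymbol{\beta}$. Then for each $\boldsymbol{\beta}_1\in\mathbb{R}^K$ and each $C>0$, $$\log\left(\frac{\nu_n(S(\boldsymbol{\beta}_1,C/\sqrt n)\mid\mathbf{Y}_n^* )}{\nu_n(S(\boldsymbol{\beta}_0,C/\sqrt n)\mid\mathbf{Y}_n^* )}\right)\rightsquigarrow \log\left(\frac{f(\boldsymbol{\beta}_1)}{f(\boldsymbol{\beta}_0)}\right)-\frac12(\boldsymbol{\beta}_1-\boldsymbol{\beta}_0)^t\boldsymbol{\Sigma}_0(\boldsymbol{\beta}_1-\boldsymbol{\beta}_0)+(\boldsymbol{\beta}_1-\boldsymbol{\beta}_0)^t\mathbf{Z}$$ in distribution, where $\mathbf{Z}\sim N(\mathbf{0},\boldsymbol{\Sigma}_0)$.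
   Context: $S(\boldsymbol{\beta},r)$ denotes the (Euclidean) ball in $\mathbb{R}^K$ centered at $\boldsymbol{\beta}$ with radius $r>0$. $\|\cdot\|$ is the Euclidean norm. $\rightsquigarrow$ denotes convergence in distribution as $n\to\infty$. *)

theory Defs
  imports "HOL-Probability.Probability"
begin

definition pos_def_mat :: "real^'k^'k \<Rightarrow> bool" where
  "pos_def_mat A \<longleftrightarrow> transpose A = A \<and> (\<forall>v. v \<noteq> 0 \<longrightarrow> v \<bullet> (A *v v) > 0)"

text \<open>X^t X for the design with rows x 0, ..., x (n-1).\<close>
definition gram :: "(nat \<Rightarrow> real^'k) \<Rightarrow> nat \<Rightarrow> real^'k^'k" where
  "gram x n = (\<chi> j l. \<Sum>i<n. x i $ j * x i $ l)"

definition gauss_law :: "real \<Rightarrow> real \<Rightarrow> real measure" where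
  "gauss_law m v = (if v = 0 then return borel m
                    else density lborel (\<lambda>t. ennreal (normal_density m (sqrt v) t)))"

definition mvnormal :: "'a measure \<Rightarrow> ('a \<Rightarrow> real^'k) \<Rightarrow> real^'k^'k \<Rightarrow> bool" where
  "mvnormal Q Z S \<longleftrightarrow> prob_space Q \<and> Z \<in> borel_measurable Q \<and>
     (\<forall>a. distr Q borel (\<lambda>w. a \<bullet> Z w) = gauss_law 0 (a \<bullet> (S *v a)))"

definition lik :: "(nat \<Rightarrow> real^'k) \<Rightarrow> nat \<Rightarrow> (nat \<Rightarrow> real) \<Rightarrow> real^'k \<Rightarrow> real" where
  "lik x n y b = (\<Prod>i<n. normal_density (x i \<bullet> b) (sqrt (real n)) (y i))"

definition posterior :: "(real^'k \<Rightarrow> real) \<Rightarrow> (nat \<Rightarrow> real^'k) \<Rightarrow> nat \<Rightarrow> (nat \<Rightarrow> real)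
    \<Rightarrow> (real^'k) set \<Rightarrow> real" where
  "posterior f x n y A =
     (\<integral>b. indicator A b * f b * lik x n y b \<partial>lborel) / (\<integral>b. f b * lik x n y b \<partial>lborel)"

end

theory Submission
  imports Defs
begin

text \<open>Let \<open>T\<^sub>n\<close> be the log posterior ratio and \<open>c\<^sub>n\<^sub>i = x\<^sub>i\<^sup>t(\<beta>\<^sub>1 - \<beta>\<^sub>0)/\<surd>n\<close>.
  On a ball of radius \<open>C/\<surd>n\<close> the integrand \<open>f \<cdot> lik\<close> of the posterior stays within a
  factor \<open>exp (\<plusminus>(\<eta> + \<rho>\<^sub>n))\<close> of its value at the centre, where \<open>\<eta>\<close> bounds the
  oscillation of \<open>ln f\<close> (continuity of \<open>f\<close>) and \<open>\<rho>\<^sub>n\<close> the variation of the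
  log-likelihood (\<open>E \<rho>\<^sub>n = O(1/\<surd>n)\<close> by the column normalisation). Hence \<open>T\<^sub>n\<close> differs
  in \<open>L\<^sup>1\<close> by at most \<open>2\<eta> + o(1)\<close> from the log prior ratio plus the log-likelihood
  ratio of \<open>\<beta>\<^sub>1\<close> against \<open>\<beta>\<^sub>0\<close>, namely
  \<open>ln (f \<beta>\<^sub>1 / f \<beta>\<^sub>0) + \<Sum> c\<^sub>n\<^sub>i \<epsilon>\<^sub>n\<^sub>i - \<Sum> c\<^sub>n\<^sub>i\<^sup>2 / 2\<close>.
  By (ii) the weights \<open>c\<^sub>n\<^sub>i\<close> are uniformly small and by (iv) \<open>\<Sum> c\<^sub>n\<^sub>i\<^sup>2\<close> tends to
  \<open>(\<beta>\<^sub>1 - \<beta>\<^sub>0)\<^sup>t \<Sigma>\<^sub>0 (\<beta>\<^sub>1 - \<beta>\<^sub>0)\<close>, so Lindeberg's central limit theorem applies to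
  the weighted noise sum; Levy's continuity theorem carries the limit over to \<open>T\<^sub>n\<close>.\<close>

section \<open>Elementary estimates and triangular arrays\<close>

lemma abs_exp_neg_minus_linear_le:
  fixes a :: real assumes "0 \<le> a"
  shows "\<bar>exp (-a) - (1 - a)\<bar> \<le> a\<^sup>2"
proof -
  have lo: "1 - a \<le> exp (-a)" using exp_ge_add_one_self[of "-a"] by simp
  have "exp (-a) = 1 / exp a" by (simp add: exp_minus field_simps)
  also have "\<dots> \<le> 1 / (1 + a)" using assms exp_ge_add_one_self[of a]
    by (intro divide_left_mono) auto
  also have "\<dots> \<le> 1 - a + a\<^sup>2"
  proof -
    have "1 \<le> (1 - a + a\<^sup>2) * (1 + a)" using assms
      by (simp add: algebra_simps power2_eq_square power3_eq_cube)
    then show ?thesis using assms by (simp add: field_simps)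
  qed
  finally show ?thesis using lo by simp
qed

lemma abs_cube_le_sq_plus_fourth: "\<bar>y::real\<bar> ^ 3 \<le> y\<^sup>2 + y ^ 4"
proof -
  have "\<bar>y\<bar> \<le> 1 + y\<^sup>2"
  proof (cases "\<bar>y\<bar> \<le> 1")
    case False
    then have "\<bar>y\<bar> * 1 \<le> \<bar>y\<bar> * \<bar>y\<bar>" by (intro mult_left_mono) auto
    then show ?thesis by (simp add: power2_eq_square)
  qed (simp add: add_increasing2)
  then have "y\<^sup>2 * \<bar>y\<bar> \<le> y\<^sup>2 * (1 + y\<^sup>2)" by (intro mult_left_mono) auto
  then show ?thesis by (simp add: power2_eq_square power3_eq_cube power4_eq_xxxx algebra_simps)
qed

lemma abs_mult_le_sq_plus_sq: "\<bar>x * y\<bar> \<le> x\<^sup>2 + y\<^sup>2" for x y :: real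
proof -
  have "2 * (\<bar>x\<bar> * \<bar>y\<bar>) \<le> x\<^sup>2 + y\<^sup>2"
    using sum_squares_bound[of "\<bar>x\<bar>" "\<bar>y\<bar>"] by (simp add: mult.assoc)
  moreover have "0 \<le> \<bar>x\<bar> * \<bar>y\<bar>" by simp
  ultimately show ?thesis unfolding abs_mult by linarith
qed

lemma norm_iexp_diff_le: "cmod (iexp a - iexp b) \<le> \<bar>a - b\<bar>"
proof -
  have "iexp a - iexp b = iexp b * (iexp (a - b) - 1)"
    by (simp add: algebra_simps exp_diff[symmetric] exp_add[symmetric] ring_distribs)
  then have "cmod (iexp a - iexp b) = cmod (iexp (a - b) - 1)"
    by (simp add: norm_mult)
  also have "\<dots> \<le> \<bar>a - b\<bar>"
    using iexp_approx1[of "a - b" 0] by simp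
  finally show ?thesis .
qed

lemma sum_abs_mult_tendsto_0:
  fixes b g :: "nat \<Rightarrow> nat \<Rightarrow> real"
  assumes b_nonneg: "\<And>n i. i < n \<Longrightarrow> 0 \<le> b n i"
    and b_sum: "(\<lambda>n. \<Sum>i<n. b n i) \<longlonglongrightarrow> \<beta>"
    and g_small: "\<And>e. e > 0 \<Longrightarrow> \<forall>\<^sub>F n in sequentially. \<forall>i<n. \<bar>g n i\<bar> \<le> e"
  shows "(\<lambda>n. \<Sum>i<n. \<bar>g n i\<bar> * b n i) \<longlonglongrightarrow> 0"
proof (rule LIMSEQ_I)
  fix r :: real assume r: "r > 0"
  define e where "e = r / (\<bar>\<beta>\<bar> + 2)"
  have e: "e > 0" using r by (simp add: e_def add_pos_nonneg)
  have "\<forall>\<^sub>F n in sequentially. (\<Sum>i<n. b n i) < \<beta> + 1"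
    using b_sum by (rule order_tendstoD) simp
  with g_small[OF e] have "\<forall>\<^sub>F n in sequentially. norm ((\<Sum>i<n. \<bar>g n i\<bar> * b n i) - 0) < r"
  proof eventually_elim
    case (elim n)
    have "norm ((\<Sum>i<n. \<bar>g n i\<bar> * b n i) - 0) = (\<Sum>i<n. \<bar>g n i\<bar> * b n i)"
      using b_nonneg by (simp, intro abs_of_nonneg sum_nonneg mult_nonneg_nonneg) auto
    also have "\<dots> \<le> (\<Sum>i<n. e * b n i)"
      using elim b_nonneg by (intro sum_mono) (auto intro!: mult_right_mono)
    also have "\<dots> = e * (\<Sum>i<n. b n i)" by (simp add: sum_distrib_left)
    also have "\<dots> \<le> e * (\<bar>\<beta>\<bar> + 1)" using elim e by (intro mult_left_mono) auto
    also have "\<dots> < r" using r e by (simp add: e_def field_simps)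
    finally show ?case .
  qed
  then show "\<exists>no. \<forall>n\<ge>no. norm ((\<Sum>i<n. \<bar>g n i\<bar> * b n i) - 0) < r"
    by (simp add: eventually_sequentially)
qed

lemma cmod_one_minus_of_real_le_1: "0 \<le> a \<Longrightarrow> a \<le> 1 \<Longrightarrow> cmod (1 - complex_of_real a) \<le> 1"
proof -
  assume "0 \<le> a" "a \<le> 1"
  have "1 - complex_of_real a = complex_of_real (1 - a)" by simp
  then show ?thesis using \<open>0 \<le> a\<close> \<open>a \<le> 1\<close> by (simp only: norm_of_real)
qed

lemma abs_prod_one_minus_exp_sum_le:
  fixes a :: "'i \<Rightarrow> real"
  assumes "finite I" and "\<And>i. i \<in> I \<Longrightarrow> 0 \<le> a i" and "\<And>i. i \<in> I \<Longrightarrow> a i \<le> 1"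
  shows "\<bar>(\<Prod>i\<in>I. 1 - a i) - exp (- (\<Sum>i\<in>I. a i))\<bar> \<le> (\<Sum>i\<in>I. (a i)\<^sup>2)"
proof -
  have "exp (- (\<Sum>i\<in>I. a i)) = (\<Prod>i\<in>I. exp (- a i))"
    using \<open>finite I\<close> by (simp add: exp_sum[symmetric] sum_negf)
  then have "\<bar>(\<Prod>i\<in>I. 1 - a i) - exp (- (\<Sum>i\<in>I. a i))\<bar>
      \<le> (\<Sum>i\<in>I. \<bar>(1 - a i) - exp (- a i)\<bar>)"
    using norm_prod_diff[of I "\<lambda>i. 1 - a i" "\<lambda>i. exp (- a i)"] assms by simp
  also have "\<dots> \<le> (\<Sum>i\<in>I. (a i)\<^sup>2)"
    using assms abs_exp_neg_minus_linear_le by (intro sum_mono) (simp add: abs_minus_commute)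
  finally show ?thesis .
qed

lemma prod_tendsto_exp_neg:
  fixes \<phi> :: "nat \<Rightarrow> nat \<Rightarrow> complex" and a :: "nat \<Rightarrow> nat \<Rightarrow> real"
  assumes \<phi>_le_1: "\<And>n i. i < n \<Longrightarrow> cmod (\<phi> n i) \<le> 1"
    and a_nonneg: "\<And>n i. i < n \<Longrightarrow> 0 \<le> a n i"
    and a_sum: "(\<lambda>n. \<Sum>i<n. a n i) \<longlonglongrightarrow> \<alpha>"
    and a_small: "\<And>e. e > 0 \<Longrightarrow> \<forall>\<^sub>F n in sequentially. \<forall>i<n. a n i \<le> e"
    and approx: "(\<lambda>n. \<Sum>i<n. cmod (\<phi> n i - (1 - a n i))) \<longlonglongrightarrow> 0"
  shows "(\<lambda>n. \<Prod>i<n. \<phi> n i) \<longlonglongrightarrow> complex_of_real (exp (- \<alpha>))"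
proof -
  have a_le_1: "\<forall>\<^sub>F n in sequentially. \<forall>i<n. a n i \<le> 1" using a_small[of 1] by simp
  have "(\<lambda>n. (\<Prod>i<n. \<phi> n i) - (\<Prod>i<n. complex_of_real (1 - a n i))) \<longlonglongrightarrow> 0"
  proof (rule Lim_null_comparison[OF _ approx])
    show "\<forall>\<^sub>F n in sequentially. norm ((\<Prod>i<n. \<phi> n i) - (\<Prod>i<n. complex_of_real (1 - a n i)))
       \<le> (\<Sum>i<n. cmod (\<phi> n i - (1 - a n i)))"
      using a_le_1 by eventually_elim
        (rule order_trans[OF norm_prod_diff],
         use \<phi>_le_1 a_nonneg in \<open>auto intro!: cmod_one_minus_of_real_le_1\<close>)
  qed
  moreover have "(\<lambda>n. (\<Prod>i<n. complex_of_real (1 - a n i)) - complex_of_real (exp (- (\<Sum>i<n. a n i))))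
      \<longlonglongrightarrow> 0"
  proof (rule Lim_null_comparison)
    show "(\<lambda>n. \<Sum>i<n. (a n i)\<^sup>2) \<longlonglongrightarrow> 0"
      using sum_abs_mult_tendsto_0[of a \<alpha> a] a_nonneg a_sum a_small
      by (simp add: power2_eq_square)
    show "\<forall>\<^sub>F n in sequentially. norm ((\<Prod>i<n. complex_of_real (1 - a n i))
        - complex_of_real (exp (- (\<Sum>i<n. a n i)))) \<le> (\<Sum>i<n. (a n i)\<^sup>2)"
      using a_le_1
    proof eventually_elim
      case (elim n)
      have "norm ((\<Prod>i<n. complex_of_real (1 - a n i)) - complex_of_real (exp (- (\<Sum>i<n. a n i))))
          = \<bar>(\<Prod>i<n. 1 - a n i) - exp (- (\<Sum>i<n. a n i))\<bar>"
        by (simp only: of_real_prod[symmetric] of_real_diff[symmetric] norm_of_real)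
      also have "\<dots> \<le> (\<Sum>i<n. (a n i)\<^sup>2)"
        using elim a_nonneg by (intro abs_prod_one_minus_exp_sum_le) auto
      finally show ?case .
    qed
  qed
  moreover have "(\<lambda>n. complex_of_real (exp (- (\<Sum>i<n. a n i)))) \<longlonglongrightarrow> complex_of_real (exp (- \<alpha>))"
    by (intro tendsto_intros a_sum)
  ultimately have "(\<lambda>n. ((\<Prod>i<n. \<phi> n i) - (\<Prod>i<n. complex_of_real (1 - a n i))) +
     ((\<Prod>i<n. complex_of_real (1 - a n i)) - complex_of_real (exp (- (\<Sum>i<n. a n i))))
     + complex_of_real (exp (- (\<Sum>i<n. a n i)))) \<longlonglongrightarrow> 0 + 0 + complex_of_real (exp (- \<alpha>))"
    by (intro tendsto_add)
  then show ?thesis by simp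
qed

section \<open>Characteristic functions\<close>

lemma (in prob_space) char_approx_fourth_moment:
  fixes X :: "'a \<Rightarrow> real"
  assumes X[measurable]: "random_variable borel X" and mean: "expectation X = 0"
    and var: "expectation (\<lambda>w. (X w)\<^sup>2) = 1"
    and int4: "integrable M (\<lambda>w. (X w) ^ 4)" and mom4: "expectation (\<lambda>w. (X w) ^ 4) \<le> B"
  shows "cmod (char (distr M borel X) s - (1 - s\<^sup>2 / 2)) \<le> \<bar>s\<bar> ^ 3 * (1 + B)"
proof -
  have int2: "integrable M (\<lambda>w. (X w)\<^sup>2)"
    using var not_integrable_integral_eq by fastforce
  have int3: "integrable M (\<lambda>w. \<bar>X w\<bar> ^ 3)"
    by (rule Bochner_Integration.integrable_bound[of _ "\<lambda>w. (X w)\<^sup>2 + (X w) ^ 4"])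
       (use int2 int4 abs_cube_le_sq_plus_fourth in \<open>auto intro!: AE_I2\<close>)
  have "expectation (\<lambda>w. \<bar>X w\<bar> ^ 3) \<le> expectation (\<lambda>w. (X w)\<^sup>2 + (X w) ^ 4)"
    by (intro integral_mono int3 Bochner_Integration.integrable_add int2 int4 abs_cube_le_sq_plus_fourth)
  also have "\<dots> \<le> 1 + B" using int2 int4 var mom4 by simp
  finally have mom3: "expectation (\<lambda>w. \<bar>X w\<bar> ^ 3) \<le> 1 + B" .
  have "cmod (char (distr M borel X) s - (1 - s\<^sup>2 * 1 / 2)) \<le>
     (s\<^sup>2 / 6) * expectation (\<lambda>w. min (6 * (X w)\<^sup>2) (\<bar>s\<bar> * \<bar>X w\<bar> ^ 3))"
    using mean var
    by (intro char_approx3' X square_integrable_imp_integrable[OF X int2] int2) simp_all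
  also have "\<dots> \<le> (s\<^sup>2 / 6) * expectation (\<lambda>w. \<bar>s\<bar> * \<bar>X w\<bar> ^ 3)"
    by (intro mult_left_mono integral_mono integrable_min
        Bochner_Integration.integrable_mult_right int2 int3) auto
  also have "\<dots> \<le> (s\<^sup>2 / 6) * (\<bar>s\<bar> * (1 + B))"
    using mult_left_mono[OF mom3, of "\<bar>s\<bar>"] by (intro mult_left_mono) auto
  also have "\<dots> = (\<bar>s\<bar> ^ 3 * (1 + B)) / 6"
    by (simp add: power2_eq_square power3_eq_cube abs_mult_self_eq)
  also have "\<dots> \<le> \<bar>s\<bar> ^ 3 * (1 + B)"
  proof -
    have "0 \<le> expectation (\<lambda>w. \<bar>X w\<bar> ^ 3)" by (rule integral_nonneg_AE) simp
    then have B_nonneg: "0 \<le> 1 + B" using mom3 by linarith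
    show ?thesis using mult_nonneg_nonneg[OF B_nonneg, of "\<bar>s\<bar> ^ 3"] by simp
  qed
  finally show ?thesis by simp
qed

lemma char_distr_shift:
  fixes X :: "'a \<Rightarrow> real"
  assumes [measurable]: "X \<in> borel_measurable M"
  shows "char (distr M borel (\<lambda>w. a + X w)) t = iexp (t * a) * char (distr M borel X) t"
  by (simp add: char_def integral_distr distrib_left exp_add)

lemma char_gauss_law:
  assumes v: "v \<ge> 0"
  shows "char (gauss_law 0 v) t = complex_of_real (exp (- (v * t\<^sup>2 / 2)))"
proof (cases "v = 0")
  case True
  then show ?thesis unfolding gauss_law_def char_def
    by (simp add: integral_return)
next
  case False
  define s where "s = sqrt v"
  have s: "s > 0" using v False by (simp add: s_def)
  have "char (gauss_law 0 v) t = (\<integral>x. normal_density 0 s x *\<^sub>R iexp (t * x) \<partial>lborel)"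
    unfolding gauss_law_def char_def s_def using False
    by (simp add: integral_density)
  also have "\<dots> = \<bar>s\<bar> *\<^sub>R (\<integral>y. normal_density 0 s (0 + s * y) *\<^sub>R iexp (t * (0 + s * y)) \<partial>lborel)"
    using s by (intro lborel_integral_real_affine) simp
  also have "\<dots> = (\<integral>y. std_normal_density y *\<^sub>R iexp ((t * s) * y) \<partial>lborel)"
  proof -
    have "s * normal_density 0 s (s * y) = std_normal_density y" for y
      using s unfolding normal_density_def
      by (simp add: real_sqrt_mult power_mult_distrib field_simps)
    then show ?thesis using s
      by (simp add: integral_scaleR_right[symmetric] scaleR_scaleR mult.assoc)
  qed
  also have "\<dots> = char std_normal_distribution (t * s)"
    unfolding char_def by (simp add: integral_density)
  also have "\<dots> = complex_of_real (exp (- ((t * s)\<^sup>2) / 2))"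
    by (simp add: char_std_normal_distribution)
  also have "(t * s)\<^sup>2 = v * t\<^sup>2" using v by (simp add: s_def power_mult_distrib)
  finally show ?thesis by simp
qed

lemma char_mvnormal_affine:
  assumes "mvnormal Q Z S" and "d \<bullet> (S *v d) \<ge> 0"
  shows "char (distr Q borel (\<lambda>w. a + d \<bullet> Z w)) t
     = iexp (t * a) * complex_of_real (exp (- (d \<bullet> (S *v d) * t\<^sup>2 / 2)))"
proof -
  have [measurable]: "Z \<in> borel_measurable Q"
    and law: "distr Q borel (\<lambda>w. d \<bullet> Z w) = gauss_law 0 (d \<bullet> (S *v d))"
    using assms(1) unfolding mvnormal_def by auto
  show ?thesis
    by (subst char_distr_shift) (simp_all add: law char_gauss_law assms(2))
qed

lemma (in prob_space) norm_char_diff_le: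
  fixes T U D :: "'a \<Rightarrow> real"
  assumes [measurable]: "T \<in> borel_measurable M" "U \<in> borel_measurable M"
    and "integrable M D" and TU: "\<And>w. w \<in> space M \<Longrightarrow> \<bar>T w - U w\<bar> \<le> D w"
  shows "cmod (char (distr M borel T) t - char (distr M borel U) t) \<le> \<bar>t\<bar> * expectation D"
proof -
  have iT: "integrable M (\<lambda>w. iexp (t * T w))" and iU: "integrable M (\<lambda>w. iexp (t * U w))"
    by (auto intro: integrable_iexp)
  have "char (distr M borel T) t - char (distr M borel U) t
      = (CLINT w|M. iexp (t * T w) - iexp (t * U w))"
    using iT iU by (simp add: char_def integral_distr)
  also have "cmod \<dots> \<le> expectation (\<lambda>w. cmod (iexp (t * T w) - iexp (t * U w)))"
    by (rule integral_norm_bound)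
  also have "\<dots> \<le> expectation (\<lambda>w. \<bar>t\<bar> * D w)"
  proof (rule integral_mono)
    show "integrable M (\<lambda>w. cmod (iexp (t * T w) - iexp (t * U w)))"
      using iT iU by (intro integrable_norm Bochner_Integration.integrable_diff)
    show "integrable M (\<lambda>w. \<bar>t\<bar> * D w)" using assms(3) by simp
    fix w assume "w \<in> space M"
    have "cmod (iexp (t * T w) - iexp (t * U w)) \<le> \<bar>t\<bar> * \<bar>T w - U w\<bar>"
      using norm_iexp_diff_le[of "t * T w" "t * U w"] by (simp add: abs_mult right_diff_distrib[symmetric])
    also have "\<dots> \<le> \<bar>t\<bar> * D w" using TU[OF \<open>w \<in> space M\<close>] by (intro mult_left_mono) auto
    finally show "cmod (iexp (t * T w) - iexp (t * U w)) \<le> \<bar>t\<bar> * D w" .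
  qed
  finally show ?thesis by simp
qed

lemma weak_conv_m_if_char_tendsto_and_close:
  fixes M :: "nat \<Rightarrow> 'a measure" and T U :: "nat \<Rightarrow> 'a \<Rightarrow> real"
  assumes prob: "\<And>n. prob_space (M n)"
    and [measurable]: "\<And>n. T n \<in> borel_measurable (M n)" "\<And>n. U n \<in> borel_measurable (M n)"
    and \<mu>: "real_distribution \<mu>"
    and char_U: "\<And>t. (\<lambda>n. char (distr (M n) borel (U n)) t) \<longlonglongrightarrow> char \<mu> t"
    and close: "\<And>\<eta>. \<eta> > 0 \<Longrightarrow> \<forall>\<^sub>F n in sequentially. \<exists>D. integrable (M n) D \<and>
        (\<forall>w\<in>space (M n). \<bar>T n w - U n w\<bar> \<le> D w) \<and> (\<integral>w. D w \<partial>M n) \<le> \<eta>"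
  shows "weak_conv_m (\<lambda>n. distr (M n) borel (T n)) \<mu>"
proof (rule levy_continuity)
  show "real_distribution (distr (M n) borel (T n))" for n
    by (rule prob_space.real_distribution_distr[OF prob]) simp
  fix t
  have "(\<lambda>n. char (distr (M n) borel (T n)) t - char (distr (M n) borel (U n)) t) \<longlonglongrightarrow> 0"
  proof (rule LIMSEQ_I)
    fix \<epsilon> :: real assume "\<epsilon> > 0"
    then have "\<epsilon> / (2 * (\<bar>t\<bar> + 1)) > 0" by (simp add: add_nonneg_pos)
    from close[OF this]
    have "\<forall>\<^sub>F n in sequentially.
        norm (char (distr (M n) borel (T n)) t - char (distr (M n) borel (U n)) t - 0) < \<epsilon>"
    proof eventually_elim
      case (elim n)
      then obtain D where "integrable (M n) D" "\<And>w. w \<in> space (M n) \<Longrightarrow> \<bar>T n w - U n w\<bar> \<le> D w"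
        and D_small: "(\<integral>w. D w \<partial>M n) \<le> \<epsilon> / (2 * (\<bar>t\<bar> + 1))" by blast
      then have "cmod (char (distr (M n) borel (T n)) t - char (distr (M n) borel (U n)) t)
          \<le> \<bar>t\<bar> * (\<integral>w. D w \<partial>M n)"
        by (intro prob_space.norm_char_diff_le prob) auto
      also have "\<dots> \<le> \<bar>t\<bar> * (\<epsilon> / (2 * (\<bar>t\<bar> + 1)))" using D_small by (intro mult_left_mono) auto
      also have "\<dots> < \<epsilon>" using \<open>\<epsilon> > 0\<close> by (simp add: field_simps add_nonneg_pos)
      finally show ?case by simp
    qed
    then show "\<exists>no. \<forall>n\<ge>no. norm (char (distr (M n) borel (T n)) t - char (distr (M n) borel (U n)) t - 0) < \<epsilon>"
      by (simp add: eventually_sequentially)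
  qed
  from tendsto_add[OF this char_U[of t]]
  show "(\<lambda>n. char (distr (M n) borel (T n)) t) \<longlonglongrightarrow> char \<mu> t" by simp
qed (fact \<mu>)

section \<open>Lindeberg's theorem for weighted noise\<close>

lemma (in prob_space) expectation_weighted_sum_sq:
  fixes e :: "nat \<Rightarrow> 'a \<Rightarrow> real"
  assumes indep: "indep_vars (\<lambda>_. borel) e {..<n}"
    and mean: "\<And>i. i < n \<Longrightarrow> expectation (e i) = 0"
    and var: "\<And>i. i < n \<Longrightarrow> expectation (\<lambda>w. (e i w)\<^sup>2) = 1"
  shows "integrable M (\<lambda>w. (\<Sum>i<n. a i * e i w)\<^sup>2)"
    and "expectation (\<lambda>w. (\<Sum>i<n. a i * e i w)\<^sup>2) = (\<Sum>i<n. (a i)\<^sup>2)"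
proof -
  have [measurable]: "e i \<in> borel_measurable M" if "i < n" for i
    using indep that by (auto simp: indep_vars_def)
  have int2: "integrable M (\<lambda>w. (e i w)\<^sup>2)" if "i < n" for i
    using var[OF that] not_integrable_integral_eq by fastforce
  have int_prod: "integrable M (\<lambda>w. e i w * e j w)" if "i < n" "j < n" for i j
  proof (rule Bochner_Integration.integrable_bound[of _ "\<lambda>w. (e i w)\<^sup>2 + (e j w)\<^sup>2"])
    show "integrable M (\<lambda>w. (e i w)\<^sup>2 + (e j w)\<^sup>2)" using int2 that by simp
    show "AE w in M. norm (e i w * e j w) \<le> norm ((e i w)\<^sup>2 + (e j w)\<^sup>2)"
      using abs_mult_le_sq_plus_sq by simp
  qed (use that in simp)
  have E_prod: "expectation (\<lambda>w. e i w * e j w) = (if i = j then 1 else 0)" if "i < n" "j < n" for i j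
  proof (cases "i = j")
    case True then show ?thesis using var[OF that(1)] by (simp add: power2_eq_square)
  next
    case False
    have indep_ij: "indep_vars (\<lambda>_. borel) e {i, j}"
      by (rule indep_vars_subset[OF indep]) (use that in auto)
    have "expectation (\<lambda>w. \<Prod>k\<in>{i,j}. e k w) = (\<Prod>k\<in>{i,j}. expectation (e k))"
      by (rule indep_vars_lebesgue_integral[OF _ indep_ij])
         (use that int2 in \<open>auto intro: square_integrable_imp_integrable\<close>)
    then show ?thesis using False mean that by simp
  qed
  have sq: "(\<Sum>i<n. a i * e i w)\<^sup>2 = (\<Sum>i<n. \<Sum>j<n. (a i * a j) * (e i w * e j w))" for w
    by (simp add: power2_eq_square sum_product ac_simps)
  show "integrable M (\<lambda>w. (\<Sum>i<n. a i * e i w)\<^sup>2)"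
    unfolding sq by (intro Bochner_Integration.integrable_sum Bochner_Integration.integrable_mult_right int_prod) auto
  have "expectation (\<lambda>w. (\<Sum>i<n. a i * e i w)\<^sup>2)
      = (\<Sum>i<n. \<Sum>j<n. (a i * a j) * expectation (\<lambda>w. e i w * e j w))"
    unfolding sq using int_prod
    by (subst Bochner_Integration.integral_sum, fastforce)
       (auto intro!: sum.cong simp: Bochner_Integration.integral_sum)
  also have "\<dots> = (\<Sum>i<n. \<Sum>j<n. (a i * a j) * (if i = j then 1 else 0))"
    by (intro sum.cong refl) (simp add: E_prod)
  also have "\<dots> = (\<Sum>i<n. (a i)\<^sup>2)"
    by (simp add: power2_eq_square if_distrib sum.delta cong: if_cong)
  finally show "expectation (\<lambda>w. (\<Sum>i<n. a i * e i w)\<^sup>2) = (\<Sum>i<n. (a i)\<^sup>2)" .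
qed

lemma (in prob_space) expectation_abs_le:
  fixes S :: "'a \<Rightarrow> real"
  assumes [measurable]: "S \<in> borel_measurable M" and int2: "integrable M (\<lambda>w. (S w)\<^sup>2)"
  shows "integrable M (\<lambda>w. \<bar>S w\<bar>)" "expectation (\<lambda>w. \<bar>S w\<bar>) \<le> (1 + expectation (\<lambda>w. (S w)\<^sup>2)) / 2"
proof -
  have AM_GM: "\<bar>y\<bar> \<le> (1 + y\<^sup>2) / 2" for y :: real
    using sum_squares_bound[of 1 "\<bar>y\<bar>"] by simp
  show int1: "integrable M (\<lambda>w. \<bar>S w\<bar>)"
    using square_integrable_imp_integrable[OF _ int2] by simp
  have "expectation (\<lambda>w. \<bar>S w\<bar>) \<le> expectation (\<lambda>w. (1 + (S w)\<^sup>2) / 2)"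
    using int2 by (intro integral_mono int1 AM_GM) simp_all
  also have "\<dots> = (1 + expectation (\<lambda>w. (S w)\<^sup>2)) / 2" using int2 by (simp add: prob_space)
  finally show "expectation (\<lambda>w. \<bar>S w\<bar>) \<le> (1 + expectation (\<lambda>w. (S w)\<^sup>2)) / 2" .
qed

lemma eventually_all_scaled_sq_le:
  fixes c :: "nat \<Rightarrow> nat \<Rightarrow> real"
  assumes c_small: "\<And>e. e > 0 \<Longrightarrow> \<forall>\<^sub>F n in sequentially. \<forall>i<n. \<bar>c n i\<bar> \<le> e" and "e > 0"
  shows "\<forall>\<^sub>F n in sequentially. \<forall>i<n. (c n i * t)\<^sup>2 / 2 \<le> e"
proof -
  define \<delta> where "\<delta> = sqrt (2 * e / (t\<^sup>2 + 1))"
  have "t\<^sup>2 + 1 > 0" by (simp add: add_nonneg_pos)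
  then have "\<delta> > 0" using \<open>e > 0\<close> by (simp add: \<delta>_def)
  from c_small[OF this] show ?thesis
  proof (elim eventually_mono, intro allI impI)
    fix n i assume "\<forall>i<n. \<bar>c n i\<bar> \<le> \<delta>" "i < n"
    then have "(c n i)\<^sup>2 \<le> \<delta>\<^sup>2"
      using power_mono[of "\<bar>c n i\<bar>" \<delta> 2] by simp
    then have "(c n i)\<^sup>2 * t\<^sup>2 \<le> 2 * e / (t\<^sup>2 + 1) * t\<^sup>2"
      using \<open>e > 0\<close> by (intro mult_right_mono) (auto simp: \<delta>_def)
    also have "\<dots> \<le> 2 * e"
      using \<open>e > 0\<close> by (simp add: field_simps add_pos_nonneg)
    finally show "(c n i * t)\<^sup>2 / 2 \<le> e" by (simp add: power_mult_distrib)
  qed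
qed

locale triangular_noise =
  fixes P :: "nat \<Rightarrow> 'a measure" and eps :: "nat \<Rightarrow> nat \<Rightarrow> 'a \<Rightarrow> real" and B :: real
  assumes prob: "\<And>n. prob_space (P n)"
    and indep: "\<And>n. prob_space.indep_vars (P n) (\<lambda>_. borel) (eps n) {..<n}"
    and mean0: "\<And>n i. i < n \<Longrightarrow> prob_space.expectation (P n) (eps n i) = 0"
    and var1: "\<And>n i. i < n \<Longrightarrow> prob_space.expectation (P n) (\<lambda>w. (eps n i w)\<^sup>2) = 1"
    and int4: "\<And>n i. i < n \<Longrightarrow> integrable (P n) (\<lambda>w. (eps n i w) ^ 4)"
    and mom4: "\<And>n i. i < n \<Longrightarrow> prob_space.expectation (P n) (\<lambda>w. (eps n i w) ^ 4) \<le> B"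
begin

lemma eps_measurable: "i < n \<Longrightarrow> eps n i \<in> borel_measurable (P n)"
  using indep[of n] prob[of n] by (auto simp: prob_space.indep_vars_def)

lemma norm_char_eps_approx_le:
  assumes "i < n"
  shows "cmod (char (distr (P n) borel (eps n i)) (c * t) - complex_of_real (1 - (c * t)\<^sup>2 / 2))
    \<le> (\<bar>t\<bar> ^ 3 * (1 + B)) * (\<bar>c\<bar> * c\<^sup>2)"
proof -
  have "\<bar>c\<bar> ^ 3 = \<bar>c\<bar> * c\<^sup>2"
    by (simp add: power3_eq_cube power2_eq_square abs_mult_self_eq)
  then have "\<bar>c * t\<bar> ^ 3 = \<bar>t\<bar> ^ 3 * (\<bar>c\<bar> * c\<^sup>2)"
    by (simp add: abs_mult power_mult_distrib)
  then show ?thesis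
    using prob_space.char_approx_fourth_moment[OF prob eps_measurable[OF assms]
        mean0[OF assms] var1[OF assms] int4[OF assms] mom4[OF assms], of "c * t"]
    by (simp add: ac_simps)
qed

lemma char_weighted_sum:
  "char (distr (P n) borel (\<lambda>w. \<Sum>i<n. c i * eps n i w)) t
     = (\<Prod>i<n. char (distr (P n) borel (eps n i)) (c i * t))"
proof -
  have "prob_space.indep_vars (P n) (\<lambda>_. borel) (\<lambda>i w. c i * eps n i w) {..<n}"
    by (rule prob_space.indep_vars_compose2[OF prob indep]) auto
  then have "char (distr (P n) borel (\<lambda>w. \<Sum>i<n. c i * eps n i w)) t
      = (\<Prod>i<n. char (distr (P n) borel (\<lambda>w. c i * eps n i w)) t)"
    by (rule prob_space.char_distr_sum[OF prob])
  also have "\<dots> = (\<Prod>i<n. char (distr (P n) borel (eps n i)) (c i * t))"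
    using eps_measurable by (intro prod.cong refl) (simp add: char_def integral_distr ac_simps)
  finally show ?thesis .
qed

text \<open>The bounded fourth moments make the error of the \<open>i\<close>-th factor \<open>O(\<bar>c\<^sub>n\<^sub>i\<bar>\<^sup>3)\<close>.\<close>

lemma char_weighted_sum_tendsto:
  fixes c :: "nat \<Rightarrow> nat \<Rightarrow> real"
  assumes c_sum: "(\<lambda>n. \<Sum>i<n. (c n i)\<^sup>2) \<longlonglongrightarrow> v"
    and c_small: "\<And>e. e > 0 \<Longrightarrow> \<forall>\<^sub>F n in sequentially. \<forall>i<n. \<bar>c n i\<bar> \<le> e"
  shows "(\<lambda>n. char (distr (P n) borel (\<lambda>w. \<Sum>i<n. c n i * eps n i w)) t)
           \<longlonglongrightarrow> complex_of_real (exp (- (v * t\<^sup>2 / 2)))"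
  unfolding char_weighted_sum
proof (rule prod_tendsto_exp_neg)
  show "cmod (char (distr (P n) borel (eps n i)) (c n i * t)) \<le> 1" if "i < n" for n i
    by (rule real_distribution.cmod_char_le_1)
       (simp add: prob_space.real_distribution_distr prob eps_measurable that)
  show "0 \<le> (c n i * t)\<^sup>2 / 2" for n i by simp
  have "(\<lambda>n. (\<Sum>i<n. (c n i)\<^sup>2) * (t\<^sup>2 / 2)) \<longlonglongrightarrow> v * (t\<^sup>2 / 2)"
    by (intro tendsto_intros c_sum)
  then show "(\<lambda>n. \<Sum>i<n. (c n i * t)\<^sup>2 / 2) \<longlonglongrightarrow> v * t\<^sup>2 / 2"
    by (simp add: sum_distrib_right sum_divide_distrib power_mult_distrib)
  show "\<forall>\<^sub>F n in sequentially. \<forall>i<n. (c n i * t)\<^sup>2 / 2 \<le> e" if "e > 0" for e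
    by (rule eventually_all_scaled_sq_le[OF c_small that])
  show "(\<lambda>n. \<Sum>i<n. cmod (char (distr (P n) borel (eps n i)) (c n i * t)
      - complex_of_real (1 - (c n i * t)\<^sup>2 / 2))) \<longlonglongrightarrow> 0"
  proof (rule Lim_null_comparison)
    have "(\<lambda>n. (\<bar>t\<bar> ^ 3 * (1 + B)) * (\<Sum>i<n. \<bar>c n i\<bar> * (c n i)\<^sup>2)) \<longlonglongrightarrow> (\<bar>t\<bar> ^ 3 * (1 + B)) * 0"
      by (intro tendsto_mult tendsto_const sum_abs_mult_tendsto_0[OF _ c_sum c_small]) auto
    then show "(\<lambda>n. (\<bar>t\<bar> ^ 3 * (1 + B)) * (\<Sum>i<n. \<bar>c n i\<bar> * (c n i)\<^sup>2)) \<longlonglongrightarrow> 0" by simp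
    have "cmod (char (distr (P n) borel (eps n i)) (c n i * t) - complex_of_real (1 - (c n i * t)\<^sup>2 / 2))
        \<le> (\<bar>t\<bar> ^ 3 * (1 + B)) * (\<bar>c n i\<bar> * (c n i)\<^sup>2)" if "i \<in> {..<n}" for n i
      using that by (intro norm_char_eps_approx_le) simp
    then show "\<forall>\<^sub>F n in sequentially. norm (\<Sum>i<n. cmod (char (distr (P n) borel (eps n i)) (c n i * t)
        - complex_of_real (1 - (c n i * t)\<^sup>2 / 2))) \<le> (\<bar>t\<bar> ^ 3 * (1 + B)) * (\<Sum>i<n. \<bar>c n i\<bar> * (c n i)\<^sup>2)"
      by (intro always_eventually allI)
         (simp add: sum_nonneg sum_distrib_left del: of_real_diff, intro sum_mono, simp)
  qed
qed

lemma expectation_abs_weighted_sum_le_1: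
  assumes "(\<Sum>i<n. (a i)\<^sup>2) = 1"
  shows "integrable (P n) (\<lambda>w. \<bar>\<Sum>i<n. a i * eps n i w\<bar>)"
    and "(\<integral>w. \<bar>\<Sum>i<n. a i * eps n i w\<bar> \<partial>P n) \<le> 1"
proof -
  have [measurable]: "(\<lambda>w. \<Sum>i<n. a i * eps n i w) \<in> borel_measurable (P n)"
    using eps_measurable by (intro borel_measurable_sum borel_measurable_times) auto
  note sq = prob_space.expectation_weighted_sum_sq[OF prob indep mean0 var1, of n a]
  show "integrable (P n) (\<lambda>w. \<bar>\<Sum>i<n. a i * eps n i w\<bar>)"
    by (rule prob_space.expectation_abs_le(1)[OF prob _ sq(1)]) simp
  show "(\<integral>w. \<bar>\<Sum>i<n. a i * eps n i w\<bar> \<partial>P n) \<le> 1"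
    using prob_space.expectation_abs_le(2)[OF prob _ sq(1)] sq(2) assms by simp
qed

end

section \<open>The Gaussian likelihood and the posterior of small balls\<close>

text \<open>The log-likelihood ratio of \<open>\<beta> + u\<close> against \<open>\<beta>\<close> when the responses are
  \<open>X i \<bullet> \<beta> + \<surd>n z i\<close>.\<close>

definition llr :: "(nat \<Rightarrow> real^'k) \<Rightarrow> nat \<Rightarrow> (nat \<Rightarrow> real) \<Rightarrow> real^'k \<Rightarrow> real" where
  "llr X n z u = (\<Sum>i<n. (X i \<bullet> u) / sqrt (real n) * z i) - (\<Sum>i<n. ((X i \<bullet> u) / sqrt (real n))\<^sup>2) / 2"

lemma llr_0 [simp]: "llr X n z 0 = 0"
  by (simp add: llr_def)

lemma lik_pos: "n > 0 \<Longrightarrow> lik X n y b > 0"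
  unfolding lik_def by (intro prod_pos normal_density_pos) simp

lemma normal_density_le: "normal_density m s x \<le> 1 / sqrt (2 * pi * s\<^sup>2)"
  unfolding normal_density_def by (intro mult_left_le) auto

lemma lik_le: "lik X n y b \<le> (1 / sqrt (2 * pi * real n)) ^ n"
proof -
  have "normal_density (X i \<bullet> b) (sqrt (real n)) (y i) \<le> 1 / sqrt (2 * pi * real n)" for i
    using normal_density_le[of "X i \<bullet> b" "sqrt (real n)" "y i"] by simp
  then have "lik X n y b \<le> (\<Prod>i<n. 1 / sqrt (2 * pi * real n))"
    unfolding lik_def by (intro prod_mono) auto
  then show ?thesis by simp
qed

lemma lik_measurable[measurable]: "lik X n y \<in> borel_measurable borel"
  unfolding lik_def[abs_def] normal_density_def by measurable

lemma lik_eq_exp_llr: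
  fixes X :: "nat \<Rightarrow> real^'k" and z :: "nat \<Rightarrow> real" and \<beta> :: "real^'k"
  assumes "n > 0"
  defines "y \<equiv> \<lambda>i. X i \<bullet> \<beta> + sqrt (real n) * z i"
  shows "lik X n y b = lik X n y \<beta> * exp (llr X n z (b - \<beta>))"
proof -
  have "normal_density (X i \<bullet> b) (sqrt (real n)) (y i) = normal_density (X i \<bullet> \<beta>) (sqrt (real n)) (y i)
      * exp ((X i \<bullet> (b - \<beta>)) / sqrt (real n) * z i - ((X i \<bullet> (b - \<beta>)) / sqrt (real n))\<^sup>2 / 2)" for i
  proof -
    define s where "s = sqrt (real n)"
    have "s > 0" using assms by (simp add: s_def)
    have key: "- ((s * z' - a)\<^sup>2) / (2 * s\<^sup>2) = - ((s * z')\<^sup>2) / (2 * s\<^sup>2) + (a / s * z' - (a / s)\<^sup>2 / 2)"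
      for a z' :: real
      using \<open>s > 0\<close> by (simp add: power2_eq_square field_simps)
    have "y i - X i \<bullet> b = s * z i - X i \<bullet> (b - \<beta>)" "y i - X i \<bullet> \<beta> = s * z i"
      by (simp_all add: y_def s_def inner_diff_right)
    then have "- ((y i - X i \<bullet> b)\<^sup>2) / (2 * s\<^sup>2)
        = - ((y i - X i \<bullet> \<beta>)\<^sup>2) / (2 * s\<^sup>2)
          + ((X i \<bullet> (b - \<beta>)) / s * z i - ((X i \<bullet> (b - \<beta>)) / s)\<^sup>2 / 2)"
      by (simp only: key)
    then have "- ((y i - X i \<bullet> b)\<^sup>2) / (2 * (sqrt (real n))\<^sup>2)
        = - ((y i - X i \<bullet> \<beta>)\<^sup>2) / (2 * (sqrt (real n))\<^sup>2)
          + ((X i \<bullet> (b - \<beta>)) / sqrt (real n) * z i - ((X i \<bullet> (b - \<beta>)) / sqrt (real n))\<^sup>2 / 2)"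
      unfolding s_def .
    note exponent = this
    show ?thesis
      unfolding normal_density_def exponent exp_add by (simp only: mult.assoc)
  qed
  then have "lik X n y b = (\<Prod>i<n. normal_density (X i \<bullet> \<beta>) (sqrt (real n)) (y i)
      * exp ((X i \<bullet> (b - \<beta>)) / sqrt (real n) * z i - ((X i \<bullet> (b - \<beta>)) / sqrt (real n))\<^sup>2 / 2))"
    unfolding lik_def by simp
  also have "\<dots> = lik X n y \<beta> * exp (llr X n z (b - \<beta>))"
    unfolding lik_def llr_def
    by (simp add: prod.distrib exp_sum[symmetric] sum_subtractf sum_divide_distrib)
  finally show ?thesis .
qed

lemma sum_norm_sq_eq:
  fixes X :: "nat \<Rightarrow> real^'k"
  assumes "\<forall>k. (\<Sum>i<n. (X i $ k)\<^sup>2) = real n"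
  shows "(\<Sum>i<n. (norm (X i))\<^sup>2) = real n * real CARD('k)"
proof -
  have "(\<Sum>i<n. (norm (X i))\<^sup>2) = (\<Sum>i<n. \<Sum>k\<in>UNIV. (X i $ k)\<^sup>2)"
    by (intro sum.cong refl)
       (simp only: power2_norm_eq_inner inner_vec_def inner_real_def, simp add: power2_eq_square)
  also have "\<dots> = (\<Sum>k\<in>UNIV. \<Sum>i<n. (X i $ k)\<^sup>2)" by (rule sum.swap)
  finally show ?thesis using assms by simp
qed

lemma llr_add_diff:
  "llr X n z (u + \<delta>) - llr X n z u
     = (\<Sum>k\<in>UNIV. \<delta> $ k * (\<Sum>i<n. X i $ k / sqrt (real n) * z i))
       - (\<Sum>i<n. (X i \<bullet> \<delta>) * (2 * (X i \<bullet> u) + X i \<bullet> \<delta>)) / (2 * real n)"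
proof -
  have "(\<Sum>i<n. (X i \<bullet> \<delta>) / sqrt (real n) * z i)
      = (\<Sum>i<n. \<Sum>k\<in>UNIV. \<delta> $ k * (X i $ k / sqrt (real n) * z i))"
    unfolding inner_vec_def inner_real_def sum_divide_distrib sum_distrib_right
    by (intro sum.cong refl) (simp add: ac_simps)
  also have "\<dots> = (\<Sum>k\<in>UNIV. \<delta> $ k * (\<Sum>i<n. X i $ k / sqrt (real n) * z i))"
    by (subst sum.swap) (simp add: sum_distrib_left)
  finally have lin: "(\<Sum>i<n. (X i \<bullet> \<delta>) / sqrt (real n) * z i) = \<dots>" .
  have "((X i \<bullet> (u + \<delta>)) / sqrt (real n))\<^sup>2 - ((X i \<bullet> u) / sqrt (real n))\<^sup>2
      = (X i \<bullet> \<delta>) * (2 * (X i \<bullet> u) + X i \<bullet> \<delta>) / real n" for i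
    by (simp add: inner_add_right power_divide power2_eq_square algebra_simps diff_divide_distrib[symmetric])
  then have quad: "(\<Sum>i<n. ((X i \<bullet> (u + \<delta>)) / sqrt (real n))\<^sup>2) - (\<Sum>i<n. ((X i \<bullet> u) / sqrt (real n))\<^sup>2)
      = (\<Sum>i<n. (X i \<bullet> \<delta>) * (2 * (X i \<bullet> u) + X i \<bullet> \<delta>)) / real n"
    by (simp add: sum_subtractf[symmetric] sum_divide_distrib[symmetric])
  show ?thesis
    unfolding llr_def using lin quad
    by (simp add: inner_add_right add_divide_distrib sum.distrib algebra_simps)
qed

lemma abs_sum_inner_increment_le:
  fixes X :: "nat \<Rightarrow> real^'k"
  assumes columns: "\<forall>k. (\<Sum>i<n. (X i $ k)\<^sup>2) = real n" and \<delta>: "norm \<delta> \<le> r"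
  shows "\<bar>\<Sum>i<n. (X i \<bullet> \<delta>) * (2 * (X i \<bullet> u) + X i \<bullet> \<delta>)\<bar> \<le> (real n * real CARD('k)) * (r * (2 * norm u + r))"
proof -
  have "r \<ge> 0" using \<delta> norm_ge_zero order_trans by blast
  have "\<bar>(X i \<bullet> \<delta>) * (2 * (X i \<bullet> u) + X i \<bullet> \<delta>)\<bar> \<le> (norm (X i))\<^sup>2 * (r * (2 * norm u + r))" for i
  proof -
    have inner_\<delta>: "\<bar>X i \<bullet> \<delta>\<bar> \<le> norm (X i) * r"
      using Cauchy_Schwarz_ineq2[of "X i" \<delta>] \<delta> by (meson mult_left_mono norm_ge_zero order_trans)
    have "\<bar>2 * (X i \<bullet> u) + X i \<bullet> \<delta>\<bar> \<le> 2 * (norm (X i) * norm u) + norm (X i) * r"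
      using Cauchy_Schwarz_ineq2[of "X i" u] inner_\<delta> by simp
    then have inner_sum: "\<bar>2 * (X i \<bullet> u) + X i \<bullet> \<delta>\<bar> \<le> norm (X i) * (2 * norm u + r)"
      by (simp add: algebra_simps)
    have "\<bar>(X i \<bullet> \<delta>) * (2 * (X i \<bullet> u) + X i \<bullet> \<delta>)\<bar> \<le> (norm (X i) * r) * (norm (X i) * (2 * norm u + r))"
      unfolding abs_mult using \<open>r \<ge> 0\<close> by (intro mult_mono inner_\<delta> inner_sum) auto
    then show ?thesis by (simp add: power2_eq_square ac_simps)
  qed
  then have "\<bar>\<Sum>i<n. (X i \<bullet> \<delta>) * (2 * (X i \<bullet> u) + X i \<bullet> \<delta>)\<bar> \<le> (\<Sum>i<n. (norm (X i))\<^sup>2 * (r * (2 * norm u + r)))"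
    by (intro order_trans[OF sum_abs] sum_mono)
  also have "\<dots> = (real n * real CARD('k)) * (r * (2 * norm u + r))"
    using sum_norm_sq_eq[OF columns] by (simp add: sum_distrib_right[symmetric])
  finally show ?thesis .
qed

lemma llr_variation_le:
  fixes X :: "nat \<Rightarrow> real^'k"
  assumes n: "n > 0" and columns: "\<forall>k. (\<Sum>i<n. (X i $ k)\<^sup>2) = real n"
    and \<delta>: "norm \<delta> \<le> r"
  shows "\<bar>llr X n z (u + \<delta>) - llr X n z u\<bar>
     \<le> r * (real CARD('k) * (norm u + r / 2) + (\<Sum>k\<in>UNIV. \<bar>\<Sum>i<n. X i $ k / sqrt (real n) * z i\<bar>))"
proof -
  define W where "W k = (\<Sum>i<n. X i $ k / sqrt (real n) * z i)" for k
  have quad: "\<bar>\<Sum>i<n. (X i \<bullet> \<delta>) * (2 * (X i \<bullet> u) + X i \<bullet> \<delta>)\<bar> \<le> (real n * real CARD('k)) * (r * (2 * norm u + r))"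
    by (rule abs_sum_inner_increment_le[OF columns \<delta>])
  have lin: "\<bar>\<Sum>k\<in>UNIV. \<delta> $ k * W k\<bar> \<le> r * (\<Sum>k\<in>UNIV. \<bar>W k\<bar>)"
  proof -
    have "\<bar>\<delta> $ k * W k\<bar> \<le> r * \<bar>W k\<bar>" for k
      using order_trans[OF component_le_norm_cart \<delta>] by (simp add: abs_mult mult_right_mono)
    then have "\<bar>\<Sum>k\<in>UNIV. \<delta> $ k * W k\<bar> \<le> (\<Sum>k\<in>UNIV. r * \<bar>W k\<bar>)"
      by (intro order_trans[OF sum_abs] sum_mono)
    then show ?thesis by (simp add: sum_distrib_left)
  qed
  have "\<bar>llr X n z (u + \<delta>) - llr X n z u\<bar>
      \<le> \<bar>\<Sum>k\<in>UNIV. \<delta> $ k * W k\<bar> + \<bar>\<Sum>i<n. (X i \<bullet> \<delta>) * (2 * (X i \<bullet> u) + X i \<bullet> \<delta>)\<bar> / (2 * real n)"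
    unfolding llr_add_diff W_def by (simp add: abs_triangle_ineq4[THEN order_trans])
  also have "\<dots> \<le> r * (\<Sum>k\<in>UNIV. \<bar>W k\<bar>) + (real n * real CARD('k)) * (r * (2 * norm u + r)) / (2 * real n)"
    using lin quad n by (intro add_mono divide_right_mono) auto
  also have "\<dots> = r * (real CARD('k) * (norm u + r / 2) + (\<Sum>k\<in>UNIV. \<bar>W k\<bar>))"
    using n by (simp add: field_simps)
  finally show ?thesis unfolding W_def .
qed

lemma ln_integral_ball_approx:
  fixes g :: "'a::euclidean_space \<Rightarrow> real"
  assumes [measurable]: "g \<in> borel_measurable borel" and r: "r > 0"
    and g_pos: "\<And>b. b \<in> ball c r \<Longrightarrow> g b > 0"
    and g_approx: "\<And>b. b \<in> ball c r \<Longrightarrow> \<bar>ln (g b) - a\<bar> \<le> e"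
  shows "integrable lborel (\<lambda>b. indicator (ball c r) b * g b)"
    and "(\<integral>b. indicator (ball c r) b * g b \<partial>lborel) > 0"
    and "\<bar>ln (\<integral>b. indicator (ball c r) b * g b \<partial>lborel) - (a + ln (measure lborel (ball c r)))\<bar> \<le> e"
proof -
  define V where "V = measure lborel (ball c r)"
  define N where "N = (\<integral>b. indicator (ball c r) b * g b \<partial>lborel)"
  have V: "V > 0" using content_ball_pos[OF r] by (simp add: V_def)
  have bounds: "exp (a - e) \<le> g b" "g b \<le> exp (a + e)" if "b \<in> ball c r" for b
    using g_approx[OF that] g_pos[OF that] by (auto simp flip: ln_le_cancel_iff)
  have int_const: "integrable lborel (\<lambda>b. indicator (ball c r) b * C)" for C :: real
    by (intro Bochner_Integration.integrable_mult_left integrable_real_indicator)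
       (use emeasure_lborel_ball_finite[of c r] in \<open>auto simp: less_top\<close>)
  show int: "integrable lborel (\<lambda>b. indicator (ball c r) b * g b)"
  proof (rule Bochner_Integration.integrable_bound[OF int_const[of "exp (a + e)"]])
    show "AE b in lborel. norm (indicator (ball c r) b * g b) \<le> norm (indicator (ball c r) b * exp (a + e))"
      using bounds g_pos by (intro AE_I2) (auto simp: indicator_def less_imp_le)
  qed (auto intro!: borel_measurable_times borel_measurable_indicator)
  have integral_const: "(\<integral>b. indicator (ball c r) b * C \<partial>lborel) = C * V" for C :: real
    by (simp add: V_def)
  have lo: "exp (a - e) * V \<le> N"
    unfolding N_def integral_const[symmetric] using bounds
    by (intro integral_mono int_const int) (auto simp: indicator_def)
  have hi: "N \<le> exp (a + e) * V"
    unfolding N_def integral_const[symmetric] using bounds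
    by (intro integral_mono int_const int) (auto simp: indicator_def)
  have "exp (a - e) * V > 0" using V by simp
  then have N: "N > 0" using lo by linarith
  have "ln (exp (a - e) * V) \<le> ln N" "ln N \<le> ln (exp (a + e) * V)"
    using lo hi N V by (subst ln_le_cancel_iff; simp)+
  then have "a - e + ln V \<le> ln N" "ln N \<le> a + e + ln V"
    using V by (simp_all add: ln_mult)
  then show "\<bar>ln N - (a + ln V)\<bar> \<le> e" unfolding N_def V_def by linarith
  from N show "N > 0" .
qed

lemma ln_integral_ball_prior_lik:
  fixes X :: "nat \<Rightarrow> real^'k" and f :: "real^'k \<Rightarrow> real" and z :: "nat \<Rightarrow> real"
  assumes n: "n > 0" and columns: "\<forall>k. (\<Sum>i<n. (X i $ k)\<^sup>2) = real n"
    and [measurable]: "f \<in> borel_measurable borel" and f_pos: "\<And>b. f b > 0"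
    and r: "r > 0" and c: "norm (c - \<beta>) \<le> R"
    and f_osc: "\<forall>b\<in>ball c r. \<bar>ln (f b) - ln (f c)\<bar> \<le> \<eta>"
  defines "y \<equiv> \<lambda>i. X i \<bullet> \<beta> + sqrt (real n) * z i"
    and "\<rho> \<equiv> r * (real CARD('k) * (R + r / 2) + (\<Sum>k\<in>UNIV. \<bar>\<Sum>i<n. X i $ k / sqrt (real n) * z i\<bar>))"
  shows "integrable lborel (\<lambda>b. indicator (ball c r) b * f b * lik X n y b)"
    and "(\<integral>b. indicator (ball c r) b * f b * lik X n y b \<partial>lborel) > 0"
    and "\<bar>ln (\<integral>b. indicator (ball c r) b * f b * lik X n y b \<partial>lborel)
          - (ln (f c) + llr X n z (c - \<beta>) + ln (lik X n y \<beta>) + ln (measure lborel (ball c r)))\<bar> \<le> \<eta> + \<rho>"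
proof -
  let ?a = "ln (f c) + llr X n z (c - \<beta>) + ln (lik X n y \<beta>)"
  have g_pos: "f b * lik X n y b > 0" if "b \<in> ball c r" for b
    by (intro mult_pos_pos f_pos lik_pos n)
  have "\<bar>ln (f b * lik X n y b) - ?a\<bar> \<le> \<eta> + \<rho>" if b: "b \<in> ball c r" for b
  proof -
    have "ln (f b * lik X n y b) = ln (f b) + llr X n z (b - \<beta>) + ln (lik X n y \<beta>)"
      using f_pos[of b] lik_pos[OF n, of X y \<beta>]
      unfolding lik_eq_exp_llr[OF n, of X \<beta> z b, folded y_def] by (simp add: ln_mult)
    moreover have "\<bar>llr X n z ((c - \<beta>) + (b - c)) - llr X n z (c - \<beta>)\<bar>
        \<le> r * (real CARD('k) * (norm (c - \<beta>) + r / 2) + (\<Sum>k\<in>UNIV. \<bar>\<Sum>i<n. X i $ k / sqrt (real n) * z i\<bar>))"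
      using b by (intro llr_variation_le[OF n columns]) (simp add: dist_norm norm_minus_commute less_imp_le)
    moreover have "\<dots> \<le> \<rho>"
      unfolding \<rho>_def using r c by (intro mult_left_mono add_right_mono) auto
    moreover have "\<bar>ln (f b) - ln (f c)\<bar> \<le> \<eta>" using f_osc b by blast
    ultimately show ?thesis by simp
  qed
  note approx = ln_integral_ball_approx[of "\<lambda>b. f b * lik X n y b", OF _ r g_pos this]
  show "integrable lborel (\<lambda>b. indicator (ball c r) b * f b * lik X n y b)"
    and "(\<integral>b. indicator (ball c r) b * f b * lik X n y b \<partial>lborel) > 0"
    and "\<bar>ln (\<integral>b. indicator (ball c r) b * f b * lik X n y b \<partial>lborel)
          - (?a + ln (measure lborel (ball c r)))\<bar> \<le> \<eta> + \<rho>"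
    using approx by (simp_all add: mult.assoc)
qed

lemma integrable_prior_lik:
  assumes "integrable lborel f"
  shows "integrable lborel (\<lambda>b. f b * lik X n y b)"
proof (rule Bochner_Integration.integrable_bound[of _ "\<lambda>b. f b * (1 / sqrt (2 * pi * real n)) ^ n"])
  show "integrable lborel (\<lambda>b. f b * (1 / sqrt (2 * pi * real n)) ^ n)"
    by (intro Bochner_Integration.integrable_mult_left assms)
  have "0 \<le> lik X n y b" for b
    unfolding lik_def by (intro prod_nonneg) simp
  then show "AE b in lborel. norm (f b * lik X n y b) \<le> norm (f b * (1 / sqrt (2 * pi * real n)) ^ n)"
    by (intro AE_I2) (simp add: abs_mult mult_left_mono lik_le)
qed (use borel_measurable_integrable[OF assms] in simp)

lemma ln_posterior_ratio_approx:
  fixes X :: "nat \<Rightarrow> real^'k" and f :: "real^'k \<Rightarrow> real" and z :: "nat \<Rightarrow> real"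
  assumes n: "n > 0" and columns: "\<forall>k. (\<Sum>i<n. (X i $ k)\<^sup>2) = real n"
    and f_meas: "f \<in> borel_measurable borel" and f_pos: "\<And>b. f b > 0"
    and f_int: "integrable lborel f" and r: "r > 0"
    and f_osc1: "\<forall>b\<in>ball \<beta>1 r. \<bar>ln (f b) - ln (f \<beta>1)\<bar> \<le> \<eta>"
    and f_osc0: "\<forall>b\<in>ball \<beta>0 r. \<bar>ln (f b) - ln (f \<beta>0)\<bar> \<le> \<eta>"
  defines "y \<equiv> \<lambda>i. X i \<bullet> \<beta>0 + sqrt (real n) * z i"
    and "\<rho> \<equiv> r * (real CARD('k) * (norm (\<beta>1 - \<beta>0) + r / 2)
                  + (\<Sum>k\<in>UNIV. \<bar>\<Sum>i<n. X i $ k / sqrt (real n) * z i\<bar>))"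
  shows "\<bar>ln (posterior f X n y (ball \<beta>1 r) / posterior f X n y (ball \<beta>0 r))
           - (ln (f \<beta>1 / f \<beta>0) + llr X n z (\<beta>1 - \<beta>0))\<bar> \<le> 2 * (\<eta> + \<rho>)"
proof -
  define N where "N c = (\<integral>b. indicator (ball c r) b * f b * lik X n y b \<partial>lborel)" for c
  have N_eq: "(\<integral>b. indicator (ball c r) b * f b * lik X n y b \<partial>lborel) = N c" for c
    by (simp add: N_def)
  note approx1 = ln_integral_ball_prior_lik[OF n columns f_meas f_pos r order_refl f_osc1, of \<beta>0 z,
      folded y_def \<rho>_def, unfolded N_eq]
  have "norm (\<beta>0 - \<beta>0) \<le> norm (\<beta>1 - \<beta>0)" by simp
  note approx0 = ln_integral_ball_prior_lik[OF n columns f_meas f_pos r this f_osc0, of z,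
      folded y_def \<rho>_def, unfolded N_eq]
  have same_volume: "measure lborel (ball \<beta>1 r) = measure lborel (ball \<beta>0 r)"
    using r by (simp add: content_ball)
  have g_nonneg: "0 \<le> f b * lik X n y b" for b
    by (intro mult_nonneg_nonneg less_imp_le f_pos lik_pos n)
  note integrable_prior_lik[OF f_int, of X n y]
  then have "N \<beta>0 \<le> (\<integral>b. f b * lik X n y b \<partial>lborel)"
    unfolding N_def using approx0(1) g_nonneg
    by (intro integral_mono) (auto simp: indicator_def)
  then have ratio: "posterior f X n y (ball \<beta>1 r) / posterior f X n y (ball \<beta>0 r) = N \<beta>1 / N \<beta>0"
    using approx0(2) unfolding posterior_def N_def by simp
  have ln_N: "ln (N \<beta>1 / N \<beta>0) = ln (N \<beta>1) - ln (N \<beta>0)"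
    using approx0(2) approx1(2) by (simp add: ln_div)
  have ln_f: "ln (f \<beta>1 / f \<beta>0) = ln (f \<beta>1) - ln (f \<beta>0)"
    using f_pos[of \<beta>1] f_pos[of \<beta>0] by (simp add: ln_div)
  note a1 = approx1(3)[unfolded same_volume] and a0 = approx0(3)[unfolded diff_self llr_0 add_0_right]
  let ?L = "ln (lik X n y \<beta>0) + ln (measure lborel (ball \<beta>0 r))"
  have "ln (N \<beta>1) - ln (N \<beta>0) - (ln (f \<beta>1) - ln (f \<beta>0) + llr X n z (\<beta>1 - \<beta>0))
      = (ln (N \<beta>1) - (ln (f \<beta>1) + llr X n z (\<beta>1 - \<beta>0) + ?L)) - (ln (N \<beta>0) - (ln (f \<beta>0) + ?L))"
    by simp
  also have "\<bar>\<dots>\<bar> \<le> 2 * (\<eta> + \<rho>)"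
    using a1 a0 abs_triangle_ineq4 by (smt (verit))
  finally show ?thesis
    unfolding ratio ln_N ln_f .
qed

lemma posterior_measurable:
  fixes y :: "'a \<Rightarrow> nat \<Rightarrow> real" and X :: "nat \<Rightarrow> real^'k"
  assumes y: "\<And>i. i < n \<Longrightarrow> (\<lambda>w. y w i) \<in> borel_measurable M"
    and [measurable]: "f \<in> borel_measurable borel" "A \<in> sets borel"
  shows "(\<lambda>w. posterior f X n (y w) A) \<in> borel_measurable M"
proof -
  have lik_meas[measurable]: "(\<lambda>(w, b). lik X n (y w) b) \<in> borel_measurable (M \<Otimes>\<^sub>M lborel)"
    unfolding lik_def case_prod_beta
  proof (rule borel_measurable_prod)
    fix i assume "i \<in> {..<n}"
    then have [measurable]: "(\<lambda>w. y w i) \<in> borel_measurable M" using y by simp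
    show "(\<lambda>p. normal_density (X i \<bullet> snd p) (sqrt (real n)) (y (fst p) i)) \<in> borel_measurable (M \<Otimes>\<^sub>M lborel)"
      unfolding normal_density_def by measurable
  qed
  have "(\<lambda>w. \<integral>b. indicator A b * f b * lik X n (y w) b \<partial>lborel) \<in> borel_measurable M"
    "(\<lambda>w. \<integral>b. f b * lik X n (y w) b \<partial>lborel) \<in> borel_measurable M"
    by (intro lborel.borel_measurable_lebesgue_integral; measurable)+
  then show ?thesis unfolding posterior_def by measurable
qed

section \<open>The design\<close>

lemma quadratic_form_eq_sum: "d \<bullet> (A *v d) = (\<Sum>j\<in>UNIV. \<Sum>l\<in>UNIV. d $ j * A $ j $ l * d $ l)"
  for d :: "real^'k"
  by (simp add: inner_vec_def matrix_vector_mult_def sum_distrib_left mult.assoc)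

lemma quadratic_form_scaled_gram:
  fixes X :: "nat \<Rightarrow> real^'k"
  shows "d \<bullet> (((1 / real n) *\<^sub>R gram X n) *v d) = (\<Sum>i<n. (X i \<bullet> d / sqrt (real n))\<^sup>2)"
proof -
  have "d \<bullet> (((1 / real n) *\<^sub>R gram X n) *v d)
      = (\<Sum>i<n. (\<Sum>j\<in>UNIV. X i $ j * d $ j) * (\<Sum>l\<in>UNIV. X i $ l * d $ l)) / real n"
    unfolding quadratic_form_eq_sum gram_def
    by (simp add: sum_distrib_left sum_distrib_right sum_divide_distrib ac_simps sum.swap[of _ "{..<n}"])
  also have "\<dots> = (\<Sum>i<n. (X i \<bullet> d)\<^sup>2 / real n)"
    by (simp add: inner_vec_def power2_eq_square sum_divide_distrib)
  also have "\<dots> = (\<Sum>i<n. (X i \<bullet> d / sqrt (real n))\<^sup>2)"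
    by (simp add: power_divide)
  finally show ?thesis .
qed

lemma tendsto_quadratic_form:
  fixes A :: "nat \<Rightarrow> real^'k^'k"
  assumes "A \<longlonglongrightarrow> A0"
  shows "(\<lambda>n. d \<bullet> (A n *v d)) \<longlonglongrightarrow> d \<bullet> (A0 *v d)"
  unfolding quadratic_form_eq_sum
  by (intro tendsto_sum tendsto_mult tendsto_const tendsto_vec_nth assms)

lemma design_weights_small:
  fixes x :: "nat \<Rightarrow> nat \<Rightarrow> real^'k"
  assumes max_norm: "(\<lambda>n. (MAX i\<in>{..<n}. norm (x n i)) / sqrt (real n)) \<longlonglongrightarrow> 0" and "e > 0"
  shows "\<forall>\<^sub>F n in sequentially. \<forall>i<n. \<bar>x n i \<bullet> d / sqrt (real n)\<bar> \<le> e"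
proof -
  have "e / (norm d + 1) > 0" using \<open>e > 0\<close> by (simp add: add_nonneg_pos)
  with max_norm have "\<forall>\<^sub>F n in sequentially. (MAX i\<in>{..<n}. norm (x n i)) / sqrt (real n) < e / (norm d + 1)"
    by (rule order_tendstoD(2))
  then show ?thesis
  proof (elim eventually_mono, intro allI impI)
    fix n i assume max_small: "(MAX i\<in>{..<n}. norm (x n i)) / sqrt (real n) < e / (norm d + 1)"
      and "i < n"
    have "\<bar>x n i \<bullet> d / sqrt (real n)\<bar> \<le> norm (x n i) / sqrt (real n) * norm d"
      using Cauchy_Schwarz_ineq2[of "x n i" d] by (simp add: divide_right_mono)
    also have "\<dots> \<le> (MAX i\<in>{..<n}. norm (x n i)) / sqrt (real n) * norm d"
      using \<open>i < n\<close> by (intro mult_right_mono divide_right_mono Max_ge) auto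
    also have "\<dots> \<le> e / (norm d + 1) * norm d"
      using max_small by (intro mult_right_mono) auto
    also have "\<dots> \<le> e / (norm d + 1) * (norm d + 1)"
      using \<open>e > 0\<close> by (intro mult_left_mono) auto
    also have "\<dots> = e"
      using add_nonneg_pos[OF norm_ge_zero[of d] zero_less_one] by simp
    finally show "\<bar>x n i \<bullet> d / sqrt (real n)\<bar> \<le> e" .
  qed
qed

section \<open>The local regression model\<close>

locale local_regression = triangular_noise P eps B
  for P :: "nat \<Rightarrow> 'a measure" and eps :: "nat \<Rightarrow> nat \<Rightarrow> 'a \<Rightarrow> real" and B :: real +
  fixes x :: "nat \<Rightarrow> nat \<Rightarrow> real^'k" and \<beta>0 \<beta>1 :: "real^'k" and \<Sigma>0 :: "real^'k^'k"
    and C :: real and f :: "real^'k \<Rightarrow> real"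
  assumes columns: "\<forall>\<^sub>F n in sequentially. \<forall>k. (\<Sum>i<n. (x n i $ k)\<^sup>2) = real n"
    and max_norm: "(\<lambda>n. (MAX i\<in>{..<n}. norm (x n i)) / sqrt (real n)) \<longlonglongrightarrow> 0"
    and gram_limit: "(\<lambda>n. (1 / real n) *\<^sub>R gram (x n) n) \<longlonglongrightarrow> \<Sigma>0"
    and f_cont: "continuous_on UNIV f"
    and f_pos: "\<And>b. f b > 0"
    and f_dens: "(\<integral>\<^sup>+ b. ennreal (f b) \<partial>lborel) = 1"
    and C_pos: "C > 0"
begin

definition ystar :: "nat \<Rightarrow> 'a \<Rightarrow> nat \<Rightarrow> real" where
  "ystar n w i = sqrt (real n) * (x n i \<bullet> ((1 / sqrt (real n)) *\<^sub>R \<beta>0) + eps n i w)"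

definition log_post_ratio :: "nat \<Rightarrow> 'a \<Rightarrow> real" where
  "log_post_ratio n w = ln (posterior f (x n) n (ystar n w) (ball \<beta>1 (C / sqrt (real n)))
                           / posterior f (x n) n (ystar n w) (ball \<beta>0 (C / sqrt (real n))))"

definition log_prior_lik_ratio :: "nat \<Rightarrow> 'a \<Rightarrow> real" where
  "log_prior_lik_ratio n w = ln (f \<beta>1 / f \<beta>0) + llr (x n) n (\<lambda>i. eps n i w) (\<beta>1 - \<beta>0)"

definition score :: "nat \<Rightarrow> 'k \<Rightarrow> 'a \<Rightarrow> real" where
  "score n k w = (\<Sum>i<n. x n i $ k / sqrt (real n) * eps n i w)"

lemma f_measurable[measurable]: "f \<in> borel_measurable borel"
  using f_cont by (rule borel_measurable_continuous_onI)

lemma f_integrable: "integrable lborel f"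
  using f_pos f_dens by (intro integrableI_nonneg) (auto simp: less_imp_le)

lemma ystar_eq: "n > 0 \<Longrightarrow> ystar n w = (\<lambda>i. x n i \<bullet> \<beta>0 + sqrt (real n) * eps n i w)"
  by (auto simp: ystar_def distrib_left)

lemma log_post_ratio_measurable[measurable]: "log_post_ratio n \<in> borel_measurable (P n)"
proof -
  have "(\<lambda>w. ystar n w i) \<in> borel_measurable (P n)" if "i < n" for i
    unfolding ystar_def using eps_measurable[OF that] by measurable
  then show ?thesis
    unfolding log_post_ratio_def
    by (intro borel_measurable_ln borel_measurable_divide posterior_measurable) auto
qed

lemma log_prior_lik_ratio_eq:
  "log_prior_lik_ratio n w = (ln (f \<beta>1 / f \<beta>0) - (\<Sum>i<n. (x n i \<bullet> (\<beta>1 - \<beta>0) / sqrt (real n))\<^sup>2) / 2)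
     + (\<Sum>i<n. x n i \<bullet> (\<beta>1 - \<beta>0) / sqrt (real n) * eps n i w)"
  unfolding log_prior_lik_ratio_def llr_def by simp

lemma log_prior_lik_ratio_measurable[measurable]: "log_prior_lik_ratio n \<in> borel_measurable (P n)"
  unfolding log_prior_lik_ratio_eq using eps_measurable
  by (intro borel_measurable_add borel_measurable_const borel_measurable_sum borel_measurable_times) auto

lemma weights_sum_sq_tendsto:
  "(\<lambda>n. \<Sum>i<n. (x n i \<bullet> (\<beta>1 - \<beta>0) / sqrt (real n))\<^sup>2) \<longlonglongrightarrow> (\<beta>1 - \<beta>0) \<bullet> (\<Sigma>0 *v (\<beta>1 - \<beta>0))"
  using tendsto_quadratic_form[OF gram_limit] unfolding quadratic_form_scaled_gram .

lemma quadratic_form_nonneg: "0 \<le> (\<beta>1 - \<beta>0) \<bullet> (\<Sigma>0 *v (\<beta>1 - \<beta>0))"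
  by (rule LIMSEQ_le_const[OF weights_sum_sq_tendsto]) (simp add: sum_nonneg)

lemma char_log_prior_lik_ratio_tendsto:
  defines "v \<equiv> (\<beta>1 - \<beta>0) \<bullet> (\<Sigma>0 *v (\<beta>1 - \<beta>0))"
  shows "(\<lambda>n. char (distr (P n) borel (log_prior_lik_ratio n)) t)
    \<longlonglongrightarrow> iexp (t * (ln (f \<beta>1 / f \<beta>0) - v / 2)) * complex_of_real (exp (- (v * t\<^sup>2 / 2)))"
proof -
  have "(\<lambda>n. iexp (t * (ln (f \<beta>1 / f \<beta>0) - (\<Sum>i<n. (x n i \<bullet> (\<beta>1 - \<beta>0) / sqrt (real n))\<^sup>2) / 2)))
      \<longlonglongrightarrow> iexp (t * (ln (f \<beta>1 / f \<beta>0) - v / 2))"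
    unfolding v_def
    by (intro isCont_tendsto_compose[OF isCont_iexp] tendsto_intros weights_sum_sq_tendsto) simp
  moreover have "(\<lambda>n. char (distr (P n) borel (\<lambda>w. \<Sum>i<n. x n i \<bullet> (\<beta>1 - \<beta>0) / sqrt (real n) * eps n i w)) t)
      \<longlonglongrightarrow> complex_of_real (exp (- (v * t\<^sup>2 / 2)))"
    unfolding v_def
    by (intro char_weighted_sum_tendsto weights_sum_sq_tendsto design_weights_small[OF max_norm])
  ultimately show ?thesis
    unfolding log_prior_lik_ratio_eq using eps_measurable
    by (subst char_distr_shift) (auto intro!: tendsto_mult borel_measurable_sum borel_measurable_times)
qed

lemma radius_tendsto_0: "(\<lambda>n. C / sqrt (real n)) \<longlonglongrightarrow> 0"
  by (intro tendsto_divide_0[OF tendsto_const] filterlim_at_top_imp_at_infinity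
      filterlim_compose[OF sqrt_at_top filterlim_real_sequentially])

lemma eventually_ln_f_oscillation_le:
  assumes "\<eta> > 0"
  shows "\<forall>\<^sub>F n in sequentially. \<forall>b\<in>ball c (C / sqrt (real n)). \<bar>ln (f b) - ln (f c)\<bar> \<le> \<eta>"
proof -
  have "continuous (at c) (\<lambda>b. ln (f b))"
    using f_cont f_pos[of c] by (intro continuous_intros) (auto simp: continuous_on_eq_continuous_at)
  then obtain \<delta> where "\<delta> > 0" and \<delta>: "\<And>b. dist b c < \<delta> \<Longrightarrow> \<bar>ln (f b) - ln (f c)\<bar> < \<eta>"
    using \<open>\<eta> > 0\<close> unfolding continuous_at_eps_delta dist_real_def by blast
  from order_tendstoD(2)[OF radius_tendsto_0 \<open>\<delta> > 0\<close>] show ?thesis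
  proof (elim eventually_mono, intro ballI)
    fix n b assume "C / sqrt (real n) < \<delta>" "b \<in> ball c (C / sqrt (real n))"
    then have "dist b c < \<delta>" by (simp add: dist_commute)
    then show "\<bar>ln (f b) - ln (f c)\<bar> \<le> \<eta>" using \<delta> by (simp add: less_imp_le)
  qed
qed

lemma eventually_log_post_ratio_approx:
  assumes "\<eta> > 0"
  shows "\<forall>\<^sub>F n in sequentially. \<forall>w. \<bar>log_post_ratio n w - log_prior_lik_ratio n w\<bar>
    \<le> 2 * (\<eta> + C / sqrt (real n) * (real CARD('k) * (norm (\<beta>1 - \<beta>0) + C / sqrt (real n) / 2)
                                  + (\<Sum>k\<in>UNIV. \<bar>score n k w\<bar>)))"
  using eventually_gt_at_top[of 0] columns
    eventually_ln_f_oscillation_le[OF assms, of \<beta>1] eventually_ln_f_oscillation_le[OF assms, of \<beta>0]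
proof eventually_elim
  case (elim n)
  then show ?case
    unfolding log_post_ratio_def log_prior_lik_ratio_def score_def ystar_eq[OF \<open>n > 0\<close>]
    using C_pos
    by (intro allI ln_posterior_ratio_approx f_measurable f_pos f_integrable) auto
qed

lemma eventually_expectation_sum_abs_score_le:
  "\<forall>\<^sub>F n in sequentially. integrable (P n) (\<lambda>w. \<Sum>k\<in>UNIV. \<bar>score n k w\<bar>)
     \<and> (\<integral>w. (\<Sum>k\<in>UNIV. \<bar>score n k w\<bar>) \<partial>P n) \<le> real CARD('k)"
  using eventually_gt_at_top[of 0] columns
proof eventually_elim
  case (elim n)
  then have "(\<Sum>i<n. (x n i $ k / sqrt (real n))\<^sup>2) = 1" for k
    by (simp add: power_divide sum_divide_distrib[symmetric])
  then have "integrable (P n) (\<lambda>w. \<bar>score n k w\<bar>)" "(\<integral>w. \<bar>score n k w\<bar> \<partial>P n) \<le> 1" for k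
    unfolding score_def by (rule expectation_abs_weighted_sum_le_1)+
  then show ?case
    using sum_mono[of UNIV "\<lambda>k. \<integral>w. \<bar>score n k w\<bar> \<partial>P n" "\<lambda>_. 1"]
    by (simp add: Bochner_Integration.integral_sum)
qed

lemma log_post_ratio_close:
  assumes "\<eta> > 0"
  shows "\<forall>\<^sub>F n in sequentially. \<exists>D. integrable (P n) D
    \<and> (\<forall>w\<in>space (P n). \<bar>log_post_ratio n w - log_prior_lik_ratio n w\<bar> \<le> D w)
    \<and> (\<integral>w. D w \<partial>P n) \<le> \<eta>"
proof -
  define K where "K = real CARD('k)"
  define r where "r n = C / sqrt (real n)" for n
  have "(\<lambda>n. r n * (K * (norm (\<beta>1 - \<beta>0) + r n / 2) + K)) \<longlonglongrightarrow> 0 * (K * (norm (\<beta>1 - \<beta>0) + 0 / 2) + K)"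
    unfolding r_def by (intro tendsto_intros radius_tendsto_0) simp
  then have "\<forall>\<^sub>F n in sequentially. r n * (K * (norm (\<beta>1 - \<beta>0) + r n / 2) + K) < \<eta> / 4"
    using assms by (intro order_tendstoD(2)) auto
  moreover have "\<eta> / 4 > 0" using assms by simp
  note approx = eventually_log_post_ratio_approx[OF this]
  ultimately show ?thesis
    using eventually_expectation_sum_abs_score_le eventually_gt_at_top[of 0]
  proof eventually_elim
    case (elim n)
    interpret prob_space "P n" by (rule prob)
    define D where "D w = 2 * (\<eta> / 4 + r n * (K * (norm (\<beta>1 - \<beta>0) + r n / 2)))
                          + 2 * r n * (\<Sum>k\<in>UNIV. \<bar>score n k w\<bar>)" for w
    have "r n > 0" using C_pos \<open>n > 0\<close> by (simp add: r_def)
    have "integrable (P n) D"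
      unfolding D_def using elim by simp
    moreover have "(\<integral>w. D w \<partial>P n) \<le> \<eta>"
    proof -
      have "(\<integral>w. D w \<partial>P n) \<le> 2 * (\<eta> / 4 + r n * (K * (norm (\<beta>1 - \<beta>0) + r n / 2))) + 2 * r n * K"
        unfolding D_def using elim \<open>r n > 0\<close> by (simp add: prob_space K_def)
      also have "\<dots> \<le> \<eta>" using elim by (simp add: algebra_simps)
      finally show ?thesis .
    qed
    moreover have "\<bar>log_post_ratio n w - log_prior_lik_ratio n w\<bar> \<le> D w" for w
      using elim unfolding D_def r_def K_def by (simp add: algebra_simps)
    ultimately show ?case by blast
  qed
qed

theorem weak_conv_log_post_ratio:
  assumes "mvnormal Q Z \<Sigma>0"
  shows "weak_conv_m (\<lambda>n. distr (P n) borel (log_post_ratio n))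
    (distr Q borel (\<lambda>w. ln (f \<beta>1 / f \<beta>0) - 1/2 * ((\<beta>1 - \<beta>0) \<bullet> (\<Sigma>0 *v (\<beta>1 - \<beta>0)))
                        + (\<beta>1 - \<beta>0) \<bullet> Z w))"
proof (rule weak_conv_m_if_char_tendsto_and_close[OF prob])
  have [measurable]: "Z \<in> borel_measurable Q" and "prob_space Q"
    using assms unfolding mvnormal_def by auto
  then show "real_distribution (distr Q borel (\<lambda>w. ln (f \<beta>1 / f \<beta>0)
      - 1/2 * ((\<beta>1 - \<beta>0) \<bullet> (\<Sigma>0 *v (\<beta>1 - \<beta>0))) + (\<beta>1 - \<beta>0) \<bullet> Z w))"
    by (intro prob_space.real_distribution_distr) auto
  have "(\<lambda>w. ln (f \<beta>1 / f \<beta>0) - 1/2 * ((\<beta>1 - \<beta>0) \<bullet> (\<Sigma>0 *v (\<beta>1 - \<beta>0))) + (\<beta>1 - \<beta>0) \<bullet> Z w)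
      = (\<lambda>w. (ln (f \<beta>1 / f \<beta>0) - (\<beta>1 - \<beta>0) \<bullet> (\<Sigma>0 *v (\<beta>1 - \<beta>0)) / 2) + (\<beta>1 - \<beta>0) \<bullet> Z w)"
    by simp
  then show "(\<lambda>n. char (distr (P n) borel (log_prior_lik_ratio n)) t)
      \<longlonglongrightarrow> char (distr Q borel (\<lambda>w. ln (f \<beta>1 / f \<beta>0)
          - 1/2 * ((\<beta>1 - \<beta>0) \<bullet> (\<Sigma>0 *v (\<beta>1 - \<beta>0))) + (\<beta>1 - \<beta>0) \<bullet> Z w)) t" for t
    using char_log_prior_lik_ratio_tendsto[of t]
    by (simp only: char_mvnormal_affine[OF assms quadratic_form_nonneg])
qed (use log_post_ratio_close in auto)

end

theorem theorem3:
  fixes x :: "nat \<Rightarrow> nat \<Rightarrow> real^'k"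
    and \<beta>0 \<beta>1 :: "real^'k"
    and \<Sigma>0 :: "real^'k^'k"
    and P :: "nat \<Rightarrow> 'a measure"
    and eps :: "nat \<Rightarrow> nat \<Rightarrow> 'a \<Rightarrow> real"
    and B C :: real
    and f :: "real^'k \<Rightarrow> real"
  assumes design_i: "\<forall>\<^sub>F n in sequentially. \<forall>k.
              (\<Sum>i<n. x n i $ k) = 0 \<and> (\<Sum>i<n. (x n i $ k)^2) = real n"
    and design_ii: "(\<lambda>n. (MAX i\<in>{..<n}. norm (x n i)) / sqrt (real n)) \<longlonglongrightarrow> 0"
    and design_iii: "\<forall>\<^sub>F n in sequentially. pos_def_mat (gram (x n) n)"
    and design_iv: "(\<lambda>n. (1 / real n) *\<^sub>R gram (x n) n) \<longlonglongrightarrow> \<Sigma>0"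
    and Sigma_pd: "pos_def_mat \<Sigma>0"
    and prob: "\<And>n. prob_space (P n)"
    and indep: "\<And>n. prob_space.indep_vars (P n) (\<lambda>_. borel) (eps n) {..<n}"
    and mean0: "\<And>n i. i < n \<Longrightarrow> prob_space.expectation (P n) (eps n i) = 0"
    and var1: "\<And>n i. i < n \<Longrightarrow> prob_space.expectation (P n) (\<lambda>w. (eps n i w)^2) = 1"
    and int4: "\<And>n i. i < n \<Longrightarrow> integrable (P n) (\<lambda>w. (eps n i w)^4)"
    and mom4: "\<And>n i. i < n \<Longrightarrow> prob_space.expectation (P n) (\<lambda>w. (eps n i w)^4) \<le> B"
    and f_cont: "continuous_on UNIV f"
    and f_pos: "\<And>b. f b > 0"
    and f_dens: "(\<integral>\<^sup>+ b. ennreal (f b) \<partial>lborel) = 1"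
    and C_pos: "C > 0"
  shows "\<forall>Q (Z :: 'b \<Rightarrow> real^'k). mvnormal Q Z \<Sigma>0 \<longrightarrow>
    (let Ystar = (\<lambda>n w i. sqrt (real n) *
                   (x n i \<bullet> ((1 / sqrt (real n)) *\<^sub>R \<beta>0) + eps n i w));
         T = (\<lambda>n w. ln (posterior f (x n) n (Ystar n w) (ball \<beta>1 (C / sqrt (real n)))
                      / posterior f (x n) n (Ystar n w) (ball \<beta>0 (C / sqrt (real n)))));
         d = \<beta>1 - \<beta>0;
         L = (\<lambda>w. ln (f \<beta>1 / f \<beta>0) - 1/2 * (d \<bullet> (\<Sigma>0 *v d)) + d \<bullet> Z w)
     in (\<forall>n. T n \<in> borel_measurable (P n)) \<and>
        weak_conv_m (\<lambda>n. distr (P n) borel (T n)) (distr Q borel L))"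
proof -
  interpret local_regression P eps B x \<beta>0 \<beta>1 \<Sigma>0 C f
  proof (intro local_regression.intro triangular_noise.intro local_regression_axioms.intro)
    show "\<forall>\<^sub>F n in sequentially. \<forall>k. (\<Sum>i<n. (x n i $ k)\<^sup>2) = real n"
      using design_i by (rule eventually_mono) blast
  qed (fact assms)+
  show ?thesis
    using log_post_ratio_measurable weak_conv_log_post_ratio
    unfolding Let_def log_post_ratio_def[abs_def] ystar_def[abs_def] by blast
qed

end
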